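(* Let $\pi:E\to\mathbb{R}^k$ be a fiber bundle, $L:J^1\pi\to\mathbb{R}$ a Lagrangian and ${\bf\Gamma}=(\Gamma_1,\dots,\Gamma_k)$ an integrable SOPDE on $J^1\pi$. Then $$\sum_{\alpha=1}^k\mathcal{L}_{\Gamma_\alpha}\Theta^\alpha_L=dL$$ if and only if $$\Gamma_\alpha\Big(\frac{\partial L}{\partial v^i_\alpha}\Big)-\frac{\partial L}{\partial q^i}=0,\qquad i=1,\dots,n.$$
   Context: $E$ is $(n+k)$-dimensional with adapted coordinates $(x^\alpha,q^i)$; $J^1\pi$ has induced coordinates $(x^\alpha,q^i,v^i_\alpha)$; summation over repeated indices. The Poincaré–Cartan $1$-forms are $\Theta^\alpha_L=L\,dx^\alpha+dL\circ S^\alpha$, where $S^\alpha$ is the canonical $(1,1)$-tensor field on $J^1\pi$ associated with $dx^\alpha$, locally $S^\alpha=(dq^i-v^i_\beta dx^\beta)\otimes\partial/\partial v^i_\alpha$; hence locally $\Theta^\alpha_L=\frac{\partial L}{\partial v^i_\alpha}(dq^i-v^i_\beta dx^\beta)+L\,dx^\alpha$. A SOPDE is a $k$-tuple of vector fields on $J^1\pi$ of the local form $\Gamma_\alpha=\partial/\partial x^\alpha+v^i_\alpha\partial/\partial q^i+\Gamma^i_{\alpha\beta}\partial/\partial v^i_\beta$ (equivalently $dx^\alpha(\Gamma_\beta)=\delta^\alpha_\beta$, $(dq^i-v^i_\gamma dx^\gamma)(\Gamma_\beta)=0$). Integrable means there is an integral section (a map $\psi:U\subset\mathbb{R}^k\to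 J^1\pi$ with $\psi_*(\partial/\partial x^\alpha)=\Gamma_\alpha\circ\psi$) through every point; the paper assumes throughout that integrable SOPDEs satisfy $[\Gamma_\alpha,\Gamma_\beta]=0$, equivalently $\Gamma^i_{\alpha\beta}=\Gamma^i_{\beta\alpha}$ and $\Gamma_\alpha(\Gamma^i_{\beta\gamma})=\Gamma_\beta(\Gamma^i_{\alpha\gamma})$. *)

theory Defs
  imports "HOL-Analysis.Analysis"
begin

text \<open>Local (adapted) coordinates on the first jet bundle J^1 pi of a fibre bundle
  pi : E -> R^k with fibre dimension n.  The index type 'a labels alpha = 1..k,
  the index type 'i labels i = 1..n.  A coordinate index is x^alpha, q^i or v^i_alpha.\<close>

type_synonym ('a, 'i) jidx = "'a + 'i + ('i \<times> 'a)"
type_synonym ('a, 'i) jpt = "real ^ ('a, 'i) jidx"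

definition Xc :: "'a \<Rightarrow> ('a, 'i) jidx" where "Xc a = Inl a"
definition Qc :: "'i \<Rightarrow> ('a, 'i) jidx" where "Qc i = Inr (Inl i)"
definition Vc :: "'i \<Rightarrow> 'a \<Rightarrow> ('a, 'i) jidx" where "Vc i a = Inr (Inr (i, a))"

definition pd :: "(('a::finite, 'i::finite) jpt \<Rightarrow> real) \<Rightarrow> ('a, 'i) jidx \<Rightarrow> ('a, 'i) jpt \<Rightarrow> real" where
  "pd f c p = deriv (\<lambda>t. f (p + t *\<^sub>R axis c 1)) 0"

fun Ck_on :: "nat \<Rightarrow> ('a::finite, 'i::finite) jpt set \<Rightarrow> (('a, 'i) jpt \<Rightarrow> real) \<Rightarrow> bool" where
  "Ck_on 0 U f = continuous_on U f"
| "Ck_on (Suc k) U f = (f differentiable_on U \<and> (\<forall>c. Ck_on k U (pd f c)))"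

definition smooth_on :: "('a::finite, 'i::finite) jpt set \<Rightarrow> (('a, 'i) jpt \<Rightarrow> real) \<Rightarrow> bool" where
  "smooth_on U f = (\<forall>k. Ck_on k U f)"

text \<open>Vector fields and 1-forms on J^1 pi, given by their components in the coordinate
  frames (d/dz^c) and (dz^c) respectively.\<close>
type_synonym ('a, 'i) vfield = "('a, 'i) jpt \<Rightarrow> real ^ ('a, 'i) jidx"
type_synonym ('a, 'i) oneform = "('a, 'i) jpt \<Rightarrow> real ^ ('a, 'i) jidx"

definition smooth_vf :: "('a::finite, 'i::finite) jpt set \<Rightarrow> ('a, 'i) vfield \<Rightarrow> bool" where
  "smooth_vf U X = (\<forall>c. smooth_on U (\<lambda>p. X p $ c))"

definition vf_app :: "('a::finite, 'i::finite) vfield \<Rightarrow> (('a, 'i) jpt \<Rightarrow> real) \<Rightarrow> ('a, 'i) jpt \<Rightarrow> real" where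
  "vf_app X f p = (\<Sum>c\<in>UNIV. X p $ c * pd f c p)"

definition lie_bracket :: "('a::finite, 'i::finite) vfield \<Rightarrow> ('a, 'i) vfield \<Rightarrow> ('a, 'i) vfield" where
  "lie_bracket X Y p = (\<chi> c. vf_app X (\<lambda>q. Y q $ c) p - vf_app Y (\<lambda>q. X q $ c) p)"

definition dfun :: "(('a::finite, 'i::finite) jpt \<Rightarrow> real) \<Rightarrow> ('a, 'i) oneform" where
  "dfun f p = (\<chi> c. pd f c p)"

definition lie_deriv1 :: "('a::finite, 'i::finite) vfield \<Rightarrow> ('a, 'i) oneform \<Rightarrow> ('a, 'i) oneform" where
  "lie_deriv1 X w p = (\<chi> c. vf_app X (\<lambda>q. w q $ c) p + (\<Sum>m\<in>UNIV. w p $ m * pd (\<lambda>q. X q $ m) c p))"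

definition dx :: "'a \<Rightarrow> ('a::finite, 'i::finite) oneform" where
  "dx a p = axis (Xc a) 1"

definition dq :: "'i \<Rightarrow> ('a::finite, 'i::finite) oneform" where
  "dq i p = axis (Qc i) 1"

definition contact :: "'i \<Rightarrow> ('a::finite, 'i::finite) oneform" where
  "contact i p = dq i p - (\<Sum>b\<in>UNIV. (p $ Vc i b) *\<^sub>R dx b p)"

definition Theta :: "(('a::finite, 'i::finite) jpt \<Rightarrow> real) \<Rightarrow> 'a \<Rightarrow> ('a, 'i) oneform" where
  "Theta L a p = (\<Sum>i\<in>UNIV. pd L (Vc i a) p *\<^sub>R contact i p) + L p *\<^sub>R dx a p"

text \<open>SOPDE on U: a k-tuple of smooth vector fields with dx^alpha(Gamma_beta) = delta and
  (dq^i - v^i_gamma dx^gamma)(Gamma_beta) = 0, i.e. Gamma_beta^{x^alpha} = delta, Gamma_beta^{q^i} = v^i_beta.\<close>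
definition is_SOPDE :: "('a::finite, 'i::finite) jpt set \<Rightarrow> ('a \<Rightarrow> ('a, 'i) vfield) \<Rightarrow> bool" where
  "is_SOPDE U G = ((\<forall>a. smooth_vf U (G a)) \<and>
     (\<forall>p\<in>U. \<forall>a b. G b p $ Xc a = (if a = b then 1 else 0)) \<and>
     (\<forall>p\<in>U. \<forall>i b. G b p $ Qc i = p $ Vc i b))"

definition integral_section ::
  "('a::finite, 'i::finite) jpt set \<Rightarrow> ('a \<Rightarrow> ('a, 'i) vfield) \<Rightarrow> (real ^ 'a) set \<Rightarrow> (real ^ 'a \<Rightarrow> ('a, 'i) jpt) \<Rightarrow> bool" where
  "integral_section U G V psi = (open V \<and> psi ` V \<subseteq> U \<and>
     (\<forall>x\<in>V. (psi has_derivative (\<lambda>h. \<Sum>a\<in>UNIV. (h $ a) *\<^sub>R G a (psi x))) (at x)))"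

text \<open>Integrable SOPDE: integral section through every point; following the paper's standing
  convention, integrable SOPDEs moreover satisfy [Gamma_alpha, Gamma_beta] = 0.\<close>
definition integrable_SOPDE :: "('a::finite, 'i::finite) jpt set \<Rightarrow> ('a \<Rightarrow> ('a, 'i) vfield) \<Rightarrow> bool" where
  "integrable_SOPDE U G = (is_SOPDE U G \<and>
     (\<forall>p\<in>U. \<exists>V psi x0. integral_section U G V psi \<and> x0 \<in> V \<and> psi x0 = p) \<and>
     (\<forall>a b. \<forall>p\<in>U. lie_bracket (G a) (G b) p = 0))"

end

theory Submission
  imports Defs
begin

text \<open>Only the derivatives of the components \<open>\<Gamma>\<^sub>\<alpha>(q\<^sup>i) = v\<^sup>i\<^sub>\<alpha>\<close> of the SOPDE enter
  \<open>\<Sum>\<^sub>\<alpha> L\<^bsub>\<Gamma>\<^sub>\<alpha>\<^esub> \<Theta>\<^sup>\<alpha>\<^sub>L\<close>, and its second-order terms \<open>\<Gamma>\<^sup>i\<^sub>\<alpha>\<^sub>\<beta> \<partial>L/\<partial>v\<^sup>i\<^sub>\<alpha>\<close> cancel against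
  those of \<open>dL(\<Gamma>\<^sub>\<beta>)\<close>, because \<open>[\<Gamma>\<^sub>\<alpha>, \<Gamma>\<^sub>\<beta>] = 0\<close> forces \<open>\<Gamma>\<^sup>i\<^sub>\<alpha>\<^sub>\<beta> = \<Gamma>\<^sup>i\<^sub>\<beta>\<^sub>\<alpha>\<close>.
  What remains is the identity \<open>\<Sum>\<^sub>\<alpha> L\<^bsub>\<Gamma>\<^sub>\<alpha>\<^esub> \<Theta>\<^sup>\<alpha>\<^sub>L = dL + \<Sum>\<^sub>i E\<^sub>i (dq\<^sup>i - v\<^sup>i\<^sub>\<beta> dx\<^sup>\<beta>)\<close>
  with \<open>E\<^sub>i\<close> the Euler-Lagrange expressions, and the contact forms are linearly independent
  because their \<open>dq\<^sup>j\<close>-components are \<open>\<delta>\<^sub>i\<^sub>j\<close>.\<close>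

definition euler_lagrange :: "(('a::finite, 'i::finite) jpt \<Rightarrow> real) \<Rightarrow> ('a \<Rightarrow> ('a, 'i) vfield) \<Rightarrow> 'i \<Rightarrow> ('a, 'i) jpt \<Rightarrow> real" where
  "euler_lagrange L G i p = (\<Sum>a\<in>UNIV. vf_app (G a) (pd L (Vc i a)) p) - pd L (Qc i) p"

lemma mult_if_zero [simp]:
  fixes a b :: "'a::{mult_zero, monoid_mult}"
  shows "a * (if P then 1 else 0) = (if P then a else 0)"
    and "(if P then 1 else 0) * a = (if P then a else 0)"
    and "a * (if P then b else 0) = (if P then a * b else 0)"
  by simp_all

lemma if_conj_zero [simp]: "(if P \<and> Q then b else 0) = (if P then if Q then b else 0 else 0)"
  by simp

lemma jidx_distinct [simp]:
  "Xc a \<noteq> Qc i" "Qc i \<noteq> Xc a" "Xc a \<noteq> Vc i b" "Vc i b \<noteq> Xc a" "Qc i \<noteq> Vc j b" "Vc j b \<noteq> Qc i"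
  "Xc a = Xc a' \<longleftrightarrow> a = a'" "Qc i = Qc i' \<longleftrightarrow> i = i'" "Vc i b = Vc i' b' \<longleftrightarrow> i = i' \<and> b = b'"
  by (auto simp: Xc_def Qc_def Vc_def)

lemma jidx_cases [case_names Xc Qc Vc]:
  obtains b where "c = Xc b" | i where "c = Qc i" | i b where "c = Vc i b"
proof (cases c)
  case (Inr d)
  then show thesis using that by (cases d) (auto simp: Xc_def Qc_def Vc_def)
qed (use that in \<open>auto simp: Xc_def\<close>)

lemma sum_jidx:
  fixes f :: "('a::finite, 'i::finite) jidx \<Rightarrow> 'b::comm_monoid_add"
  shows "(\<Sum>c\<in>UNIV. f c) = (\<Sum>a\<in>UNIV. f (Xc a)) + (\<Sum>i\<in>UNIV. f (Qc i)) + (\<Sum>i\<in>UNIV. \<Sum>a\<in>UNIV. f (Vc i a))"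
proof -
  have "(\<Sum>c\<in>UNIV. f c) = (\<Sum>c\<in>UNIV <+> UNIV. f c)" by simp
  also have "\<dots> = (\<Sum>a\<in>UNIV. f (Xc a)) + (\<Sum>c\<in>UNIV <+> UNIV. f (Inr c))"
    by (subst sum.Plus) (auto simp: Xc_def o_def)
  also have "(\<Sum>c\<in>UNIV <+> UNIV. f (Inr c)) = (\<Sum>i\<in>UNIV. f (Qc i)) + (\<Sum>c\<in>UNIV. f (Inr (Inr c)))"
    by (subst sum.Plus) (auto simp: Qc_def o_def)
  also have "(\<Sum>c\<in>UNIV. f (Inr (Inr c))) = (\<Sum>i\<in>UNIV. \<Sum>a\<in>UNIV. f (Vc i a))"
    unfolding Vc_def by (simp add: sum.cartesian_product UNIV_Times_UNIV[symmetric] del: UNIV_Times_UNIV)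
  finally show ?thesis by (simp add: add.assoc)
qed

lemma has_derivative_imp_pd:
  assumes "(f has_derivative f') (at p)"
  shows "pd f c p = f' (axis c 1)"
proof -
  have line: "((\<lambda>t::real. p + t *\<^sub>R axis c 1) has_derivative (\<lambda>t. t *\<^sub>R axis c 1)) (at 0)"
    by (auto intro!: derivative_eq_intros)
  have "((\<lambda>t. f (p + t *\<^sub>R axis c 1)) has_derivative (\<lambda>t. f' (t *\<^sub>R axis c 1))) (at 0)"
    using diff_chain_at[OF line, of f f'] assms by (simp add: o_def)
  moreover have "(\<lambda>t. f' (t *\<^sub>R axis c 1)) = (\<lambda>t. f' (axis c 1) * t)"
    using linear_scale[OF has_derivative_linear[OF assms]] by (auto simp: mult.commute)
  ultimately have "((\<lambda>t. f (p + t *\<^sub>R axis c 1)) has_field_derivative f' (axis c 1)) (at 0)"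
    by (simp add: has_field_derivative_def)
  then show ?thesis unfolding pd_def by (rule DERIV_imp_deriv)
qed

lemma has_derivative_imp_vf_app:
  assumes "(f has_derivative f') (at p)"
  shows "vf_app X f p = f' (X p)"
proof -
  have lin: "linear f'" using assms by (rule has_derivative_linear)
  have "vf_app X f p = (\<Sum>c\<in>UNIV. f' (X p $ c *\<^sub>R axis c 1))"
    unfolding vf_app_def has_derivative_imp_pd[OF assms] using linear_scale[OF lin] by simp
  also have "\<dots> = f' (\<Sum>c\<in>UNIV. X p $ c *\<^sub>R axis c 1)"
    by (simp add: linear_sum[OF lin])
  also have "(\<Sum>c\<in>UNIV. X p $ c *\<^sub>R axis c 1) = X p"
    using basis_expansion[of "X p"] by (simp add: scalar_mult_eq_scaleR)
  finally show ?thesis .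
qed

lemma Ck_on_Suc_has_derivative:
  assumes "Ck_on (Suc k) U f" "open U" "p \<in> U"
  shows "(f has_derivative frechet_derivative f (at p)) (at p)"
  using assms by (simp add: differentiable_on_eq_differentiable_at frechet_derivative_works[symmetric])

lemma Theta_component_Xc:
  "Theta L a q $ Xc b = L q * (if a = b then 1 else 0) - (\<Sum>i\<in>UNIV. pd L (Vc i a) q * q $ Vc i b)"
  by (simp add: Theta_def contact_def dq_def dx_def axis_def sum_subtractf sum_negf)

lemma Theta_component_Qc: "Theta L a q $ Qc j = pd L (Vc j a) q"
  by (simp add: Theta_def contact_def dq_def dx_def axis_def)

lemma Theta_component_Vc: "Theta L a q $ Vc j b = 0"
  by (simp add: Theta_def contact_def dq_def dx_def axis_def)

lemma contact_component_Xc: "contact i p $ Xc b = - p $ Vc i b"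
  by (simp add: contact_def dq_def dx_def axis_def)

lemma contact_component_Vc: "contact i p $ Vc j b = 0"
  by (simp add: contact_def dq_def dx_def axis_def)

lemma contact_component_Qc: "contact i p $ Qc j = (if i = j then 1 else 0)"
  by (simp add: contact_def dq_def dx_def axis_def)

lemma sum_scaleR_contact_eq_0_iff:
  "(\<Sum>i\<in>UNIV. e i *\<^sub>R contact i p) = 0 \<longleftrightarrow> (\<forall>i. e i = 0)"
proof
  assume "(\<Sum>i\<in>UNIV. e i *\<^sub>R contact i p) = 0"
  then have "(\<Sum>i\<in>UNIV. e i *\<^sub>R contact i p) $ Qc j = 0" for j by simp
  then show "\<forall>i. e i = 0" by (simp add: contact_component_Qc)
qed simp

lemma is_SOPDE_vf_app:
  assumes "is_SOPDE U G" "p \<in> U"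
  shows "vf_app (G b) f p = pd f (Xc b) p + (\<Sum>i\<in>UNIV. p $ Vc i b * pd f (Qc i) p)
           + (\<Sum>i\<in>UNIV. \<Sum>a\<in>UNIV. G b p $ Vc i a * pd f (Vc i a) p)"
  using assms unfolding vf_app_def by (subst sum_jidx) (simp add: is_SOPDE_def)

lemma is_SOPDE_Xc_has_derivative:
  assumes "is_SOPDE U G" "open U" "p \<in> U"
  shows "((\<lambda>q. G a q $ Xc b) has_derivative (\<lambda>h. 0)) (at p)"
  by (rule has_derivative_transform_within_open[OF has_derivative_const assms(2,3), of "if b = a then 1 else 0"])
     (use assms(1) in \<open>auto simp: is_SOPDE_def\<close>)

lemma is_SOPDE_Qc_has_derivative:
  assumes "is_SOPDE U G" "open U" "p \<in> U"
  shows "((\<lambda>q. G a q $ Qc i) has_derivative (\<lambda>h. h $ Vc i a)) (at p)"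
  by (rule has_derivative_transform_within_open[OF _ assms(2,3), of "\<lambda>q. q $ Vc i a"])
     (use assms(1) in \<open>auto simp: is_SOPDE_def intro: bounded_linear_imp_has_derivative\<close>)

lemma integrable_SOPDE_Vc_sym:
  assumes "integrable_SOPDE U G" "open U" "p \<in> U"
  shows "G a p $ Vc i b = G b p $ Vc i a"
proof -
  have SOPDE: "is_SOPDE U G" using assms(1) by (simp add: integrable_SOPDE_def)
  have "lie_bracket (G a) (G b) p $ Qc i = 0" using assms by (simp add: integrable_SOPDE_def)
  then show ?thesis
    unfolding lie_bracket_def
    by (simp add: has_derivative_imp_vf_app[OF is_SOPDE_Qc_has_derivative[OF SOPDE assms(2,3)]])
qed

lemma sum_lie_deriv_Theta_component:
  assumes "is_SOPDE U G" "open U" "p \<in> U"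
  shows "(\<Sum>a\<in>UNIV. lie_deriv1 (G a) (Theta L a) p) $ c =
    (\<Sum>a\<in>UNIV. vf_app (G a) (\<lambda>q. Theta L a q $ c) p + (\<Sum>i\<in>UNIV. pd L (Vc i a) p * axis c 1 $ Vc i a))"
proof -
  have "(\<Sum>m\<in>UNIV. Theta L a p $ m * pd (\<lambda>q. G a q $ m) c p)
        = (\<Sum>i\<in>UNIV. pd L (Vc i a) p * axis c 1 $ Vc i a)" for a
    by (subst sum_jidx)
       (simp add: has_derivative_imp_pd[OF is_SOPDE_Xc_has_derivative[OF assms]]
         has_derivative_imp_pd[OF is_SOPDE_Qc_has_derivative[OF assms]] Theta_component_Vc Theta_component_Qc)
  then show ?thesis by (simp add: lie_deriv1_def)
qed

lemma sum_lie_deriv_Theta_Qc: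
  assumes "is_SOPDE U G" "open U" "p \<in> U"
  shows "(\<Sum>a\<in>UNIV. lie_deriv1 (G a) (Theta L a) p) $ Qc j = pd L (Qc j) p + euler_lagrange L G j p"
  unfolding sum_lie_deriv_Theta_component[OF assms] Theta_component_Qc euler_lagrange_def
  by (simp add: axis_def)

lemma sum_lie_deriv_Theta_Vc:
  assumes "is_SOPDE U G" "open U" "p \<in> U"
  shows "(\<Sum>a\<in>UNIV. lie_deriv1 (G a) (Theta L a) p) $ Vc j b = pd L (Vc j b) p"
proof -
  have "vf_app (G a) (\<lambda>q. 0) p = 0" for a
    by (simp add: has_derivative_imp_vf_app[OF has_derivative_const])
  then show ?thesis
    unfolding sum_lie_deriv_Theta_component[OF assms] Theta_component_Vc
    by (simp add: axis_def)
qed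

lemma sum_lie_deriv_Theta_Xc:
  assumes "open U" "Ck_on 2 U L" "integrable_SOPDE U G" "p \<in> U"
  shows "(\<Sum>a\<in>UNIV. lie_deriv1 (G a) (Theta L a) p) $ Xc b
           = pd L (Xc b) p - (\<Sum>i\<in>UNIV. p $ Vc i b * euler_lagrange L G i p)"
proof -
  have SOPDE: "is_SOPDE U G" using assms(3) by (simp add: integrable_SOPDE_def)
  define DL where "DL = frechet_derivative L (at p)"
  define DV where "DV c = frechet_derivative (pd L c) (at p)" for c
  define Lv where "Lv i a = pd L (Vc i a) p" for i a
  define E where "E i a = vf_app (G a) (pd L (Vc i a)) p" for i a
  have hL: "(L has_derivative DL) (at p)"
    using Ck_on_Suc_has_derivative[of 1 U L] assms(1,2,4) by (simp add: DL_def numeral_2_eq_2)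
  have hV: "(pd L c has_derivative DV c) (at p)" for c
    using Ck_on_Suc_has_derivative[of 0 U "pd L c"] assms(1,2,4) by (simp add: DV_def numeral_2_eq_2)
  have Theta_Xc_derivative: "((\<lambda>q. Theta L a q $ Xc b) has_derivative (\<lambda>h. DL h * (if a = b then 1 else 0)
      - (\<Sum>i\<in>UNIV. Lv i a * h $ Vc i b + DV (Vc i a) h * p $ Vc i b))) (at p)" for a
    unfolding Theta_component_Xc Lv_def
    by (intro derivative_eq_intros) (auto intro: hL hV bounded_linear_imp_has_derivative)
  have Theta_Xc: "vf_app (G a) (\<lambda>q. Theta L a q $ Xc b) p = DL (G a p) * (if a = b then 1 else 0)
      - (\<Sum>i\<in>UNIV. Lv i a * G a p $ Vc i b + E i a * p $ Vc i b)" for a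
    unfolding has_derivative_imp_vf_app[OF Theta_Xc_derivative] E_def has_derivative_imp_vf_app[OF hV] ..
  have DL_Gb: "DL (G b p) = pd L (Xc b) p + (\<Sum>i\<in>UNIV. p $ Vc i b * pd L (Qc i) p)
      + (\<Sum>i\<in>UNIV. \<Sum>a\<in>UNIV. G a p $ Vc i b * Lv i a)"
  proof -
    have "DL (G b p) = vf_app (G b) L p" by (rule has_derivative_imp_vf_app[OF hL, symmetric])
    also have "\<dots> = pd L (Xc b) p + (\<Sum>i\<in>UNIV. p $ Vc i b * pd L (Qc i) p)
      + (\<Sum>i\<in>UNIV. \<Sum>a\<in>UNIV. G b p $ Vc i a * Lv i a)"
      by (simp add: is_SOPDE_vf_app[OF SOPDE assms(4)] Lv_def)
    finally show ?thesis by (simp add: integrable_SOPDE_Vc_sym[OF assms(3,1,4)])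
  qed
  have "(\<Sum>a\<in>UNIV. lie_deriv1 (G a) (Theta L a) p) $ Xc b
      = DL (G b p) - (\<Sum>a\<in>UNIV. \<Sum>i\<in>UNIV. Lv i a * G a p $ Vc i b) - (\<Sum>a\<in>UNIV. \<Sum>i\<in>UNIV. E i a * p $ Vc i b)"
    unfolding sum_lie_deriv_Theta_component[OF SOPDE assms(1,4)] Theta_Xc
    by (simp add: axis_def sum.distrib sum_subtractf)
  also have "\<dots> = pd L (Xc b) p - (\<Sum>i\<in>UNIV. p $ Vc i b * ((\<Sum>a\<in>UNIV. E i a) - pd L (Qc i) p))"
  proof -
    have "(\<Sum>a\<in>UNIV. \<Sum>i\<in>UNIV. Lv i a * G a p $ Vc i b) = (\<Sum>i\<in>UNIV. \<Sum>a\<in>UNIV. G a p $ Vc i b * Lv i a)"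
      by (subst sum.swap) (simp add: mult.commute)
    moreover have "(\<Sum>a\<in>UNIV. \<Sum>i\<in>UNIV. E i a * p $ Vc i b) = (\<Sum>i\<in>UNIV. p $ Vc i b * (\<Sum>a\<in>UNIV. E i a))"
      unfolding sum_distrib_left mult.commute[of "p $ _"] by (rule sum.swap)
    ultimately show ?thesis
      unfolding DL_Gb by (simp add: right_diff_distrib sum_subtractf)
  qed
  finally show ?thesis by (simp add: euler_lagrange_def E_def)
qed

theorem sum_lie_deriv_Theta_eq:
  assumes "open U" "Ck_on 2 U L" "integrable_SOPDE U G" "p \<in> U"
  shows "(\<Sum>a\<in>UNIV. lie_deriv1 (G a) (Theta L a) p)
           = dfun L p + (\<Sum>i\<in>UNIV. euler_lagrange L G i p *\<^sub>R contact i p)"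
proof -
  have SOPDE: "is_SOPDE U G" using assms(3) by (simp add: integrable_SOPDE_def)
  have "(\<Sum>a\<in>UNIV. lie_deriv1 (G a) (Theta L a) p) $ c
          = (dfun L p + (\<Sum>i\<in>UNIV. euler_lagrange L G i p *\<^sub>R contact i p)) $ c" for c
  proof (cases c rule: jidx_cases)
    case (Xc b)
    then show ?thesis
      by (simp only: sum_lie_deriv_Theta_Xc[OF assms])
        (simp add: dfun_def contact_component_Xc sum_negf mult.commute)
  next
    case Qc
    then show ?thesis
      by (simp only: sum_lie_deriv_Theta_Qc[OF SOPDE assms(1,4)])
        (simp add: dfun_def contact_component_Qc)
  next
    case Vc
    then show ?thesis
      by (simp only: sum_lie_deriv_Theta_Vc[OF SOPDE assms(1,4)])
        (simp add: dfun_def contact_component_Vc)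
  qed
  then show ?thesis by (simp add: vec_eq_iff)
qed

theorem mainTheorem3:
  fixes U :: "('a::finite, 'i::finite) jpt set"
    and L :: "('a, 'i) jpt \<Rightarrow> real"
    and G :: "'a \<Rightarrow> ('a, 'i) vfield"
  assumes "open U"
    and "smooth_on U L"
    and "integrable_SOPDE U G"
  shows "(\<forall>p\<in>U. (\<Sum>a\<in>UNIV. lie_deriv1 (G a) (Theta L a) p) = dfun L p) \<longleftrightarrow>
         (\<forall>p\<in>U. \<forall>i. (\<Sum>a\<in>UNIV. vf_app (G a) (pd L (Vc i a)) p) - pd L (Qc i) p = 0)"
proof -
  have "Ck_on 2 U L" using assms(2) by (simp add: smooth_on_def)
  then have "(\<Sum>a\<in>UNIV. lie_deriv1 (G a) (Theta L a) p) = dfun L p \<longleftrightarrow> (\<forall>i. euler_lagrange L G i p = 0)"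
    if "p \<in> U" for p
    using sum_lie_deriv_Theta_eq[OF assms(1) _ assms(3) that] sum_scaleR_contact_eq_0_iff by simp
  then show ?thesis by (simp add: euler_lagrange_def)
qed

end
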